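(* Let $Q_0,\beta_1,\beta_2,\beta_3,c_1,c_2,c_3,\theta,\pi,\delta,\alpha,\mu$ be positive constants and $u_1\in[0,1]$ a constant. Consider the system \[ \begin{aligned} S' &= Q_0-\beta_m S-\mu S,\\ I_1' &= \beta_m S-(\theta+\mu+\delta)I_1,\\ I_2' &= \theta I_1-(\delta+\mu+\pi)I_2,\\ A' &= \delta I_1+\delta I_2+\pi I_2-(\alpha+\mu)A, \end{aligned} \qquad \beta_m=\frac{(1-u_1)(\beta_1c_1I_1+\beta_2c_2I_2+\beta_3c_3A)}{N},\quad N=S+I_1+I_2+A, \] and define $R_0=\zeta_1+\zeta_2+\zeta_3+\zeta_4$ with \[ \zeta_1=\frac{(1-u_1)\beta_1c_1}{\theta+\delta+\mu},\quad \zeta_2=\frac{(1-u_1)\beta_2c_2\theta}{(\theta+\delta+\mu)(\delta+\mu+\pi)},\quad \zeta_3=\frac{(1-u_1)\beta_3c_3\theta(\delta+\pi)}{(\theta+\delta+\mu)(\delta+\mu+\pi)(\alpha+\mu)},\quad \zeta_4=\frac{(1-u_1)\beta_3c_3\delta}{(\theta+\delta+\mu)(\alpha+\mu)}. \] (i) If $R_0\le 1$, the system admits the single (disease-free) equilibrium $E_0=(Q_0/\mu,0,0,0)$ in the nonnegative orthant. (ii) If $R_0>1$, the system admits two distinct equilibria: $E_0$ and a positive endemic equilibrium $E_1=(S^*,I_1^*,I_2^*,A^* )$ with all components positive.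
   Context: $S$ denotes susceptibles, $I_1$ unaware infectives, $I_2$ aware infectives, $A$ individuals with AIDS; $N$ is the total population; $R_0$ is the basic reproduction number. *)

theory Defs
  imports Complex_Main
begin

definition beta_m :: "real \<Rightarrow> real \<Rightarrow> real \<Rightarrow> real \<Rightarrow> real \<Rightarrow> real \<Rightarrow> real
    \<Rightarrow> real \<Rightarrow> real \<Rightarrow> real \<Rightarrow> real \<Rightarrow> real" where
  "beta_m u1 b1 b2 b3 c1 c2 c3 S I1 I2 A =
     (1 - u1) * (b1 * c1 * I1 + b2 * c2 * I2 + b3 * c3 * A) / (S + I1 + I2 + A)"

definition is_equilibrium :: "real \<Rightarrow> real \<Rightarrow> real \<Rightarrow> real \<Rightarrow> real \<Rightarrow> real \<Rightarrow> real
    \<Rightarrow> real \<Rightarrow> real \<Rightarrow> real \<Rightarrow> real \<Rightarrow> real \<Rightarrow> real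
    \<Rightarrow> real \<times> real \<times> real \<times> real \<Rightarrow> bool" where
  "is_equilibrium Q0 b1 b2 b3 c1 c2 c3 th pp dl al mu u1 E =
     (case E of (S, I1, I2, A) \<Rightarrow>
       (let bm = beta_m u1 b1 b2 b3 c1 c2 c3 S I1 I2 A in
          Q0 - bm * S - mu * S = 0 \<and>
          bm * S - (th + mu + dl) * I1 = 0 \<and>
          th * I1 - (dl + mu + pp) * I2 = 0 \<and>
          dl * I1 + dl * I2 + pp * I2 - (al + mu) * A = 0))"

definition R0 :: "real \<Rightarrow> real \<Rightarrow> real \<Rightarrow> real \<Rightarrow> real \<Rightarrow> real
    \<Rightarrow> real \<Rightarrow> real \<Rightarrow> real \<Rightarrow> real \<Rightarrow> real \<Rightarrow> real \<Rightarrow> real" where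
  "R0 b1 b2 b3 c1 c2 c3 th pp dl al mu u1 =
     (1 - u1) * b1 * c1 / (th + dl + mu)
   + (1 - u1) * b2 * c2 * th / ((th + dl + mu) * (dl + mu + pp))
   + (1 - u1) * b3 * c3 * th * (dl + pp) / ((th + dl + mu) * (dl + mu + pp) * (al + mu))
   + (1 - u1) * b3 * c3 * dl / ((th + dl + mu) * (al + mu))"

definition nonneg4 :: "real \<times> real \<times> real \<times> real \<Rightarrow> bool" where
  "nonneg4 E = (case E of (S, I1, I2, A) \<Rightarrow> 0 \<le> S \<and> 0 \<le> I1 \<and> 0 \<le> I2 \<and> 0 \<le> A)"

definition pos4 :: "real \<times> real \<times> real \<times> real \<Rightarrow> bool" where
  "pos4 E = (case E of (S, I1, I2, A) \<Rightarrow> 0 < S \<and> 0 < I1 \<and> 0 < I2 \<and> 0 < A)"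

end

theory Submission
  imports Defs
begin

text \<open>At an equilibrium the last two equations are linear and give \<open>I\<^sub>2\<close> and \<open>A\<close> as fixed
  multiples of \<open>I\<^sub>1\<close>, so \<open>N = S + n I\<^sub>1\<close> and \<open>\<beta>\<^sub>m = K I\<^sub>1 / N\<close> for constants \<open>n, K\<close> with
  \<open>R\<^sub>0 = K / k\<^sub>1\<close>, \<open>k\<^sub>1 = \<theta> + \<mu> + \<delta>\<close>. Adding the first two equations gives \<open>\<mu> S + k\<^sub>1 I\<^sub>1 = Q\<^sub>0\<close>,
  and the second one says \<open>I\<^sub>1 = 0\<close> (the disease-free state) or \<open>(K - k\<^sub>1) S = k\<^sub>1 n I\<^sub>1\<close>.
  For \<open>K \<le> k\<^sub>1\<close> the latter has no solution with \<open>I\<^sub>1 > 0\<close>; for \<open>K > k\<^sub>1\<close> the two linear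
  equations have exactly one solution, and it is positive.\<close>

locale hiv_model =
  fixes Q0 b1 b2 b3 c1 c2 c3 th pp dl al mu u1 :: real
  assumes Q0_pos: "Q0 > 0"
    and th_pos: "th > 0" and pp_pos: "pp > 0" and dl_pos: "dl > 0"
    and al_pos: "al > 0" and mu_pos: "mu > 0"
begin

definition k1 :: real where "k1 = th + mu + dl"
definition k2 :: real where "k2 = dl + mu + pp"
definition k3 :: real where "k3 = al + mu"

definition ratio_I2 :: real where "ratio_I2 = th / k2"
definition ratio_A :: real where "ratio_A = (dl + (dl + pp) * ratio_I2) / k3"
definition ratio_N :: real where "ratio_N = 1 + ratio_I2 + ratio_A"

definition transmission :: real where
  "transmission = (1 - u1) * (b1 * c1 + b2 * c2 * ratio_I2 + b3 * c3 * ratio_A)"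

lemma k_pos: "k1 > 0" "k2 > 0" "k3 > 0"
  using th_pos pp_pos dl_pos al_pos mu_pos by (simp_all add: k1_def k2_def k3_def)

lemma ratios_pos: "ratio_I2 > 0" "ratio_A > 0" "ratio_N > 0"
proof -
  show I2: "ratio_I2 > 0" using th_pos k_pos by (simp add: ratio_I2_def)
  show A: "ratio_A > 0"
    using dl_pos pp_pos k_pos I2 by (simp add: ratio_A_def add_pos_pos)
  show "ratio_N > 0" using I2 A by (simp add: ratio_N_def)
qed

lemma R0_eq: "R0 b1 b2 b3 c1 c2 c3 th pp dl al mu u1 = transmission / k1"
proof -
  have "R0 b1 b2 b3 c1 c2 c3 th pp dl al mu u1 =
      (1 - u1) * b1 * c1 / k1 + (1 - u1) * b2 * c2 * th / (k1 * k2)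
      + (1 - u1) * b3 * c3 * th * (dl + pp) / (k1 * k2 * k3)
      + (1 - u1) * b3 * c3 * dl / (k1 * k3)"
    by (simp add: R0_def k1_def k2_def k3_def add_ac)
  also have "\<dots> = transmission / k1"
    using k_pos by (simp add: transmission_def ratio_A_def ratio_I2_def field_simps)
  finally show ?thesis .
qed

lemma I2_A_equations_iff:
  "th * I1 - (dl + mu + pp) * I2 = 0 \<and> dl * I1 + dl * I2 + pp * I2 - (al + mu) * A = 0
     \<longleftrightarrow> I2 = ratio_I2 * I1 \<and> A = ratio_A * I1"
proof -
  have I2: "th * I1 - (dl + mu + pp) * I2 = 0 \<longleftrightarrow> I2 = ratio_I2 * I1"
    using k_pos by (auto simp: ratio_I2_def k2_def field_simps)
  have A: "dl * I1 + dl * I2 + pp * I2 - (al + mu) * A = 0 \<longleftrightarrow> A = ratio_A * I1"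
    if "I2 = ratio_I2 * I1"
    using k_pos that by (auto simp: ratio_A_def k3_def field_simps)
  show ?thesis using I2 A by blast
qed

lemma beta_m_on_ratios:
  "beta_m u1 b1 b2 b3 c1 c2 c3 S I1 (ratio_I2 * I1) (ratio_A * I1)
     = transmission * I1 / (S + ratio_N * I1)"
  by (simp add: beta_m_def transmission_def ratio_N_def algebra_simps)

lemma I1_equation_iff:
  assumes "0 \<le> S" "0 \<le> I1"
  shows "transmission * I1 / (S + ratio_N * I1) * S = k1 * I1
           \<longleftrightarrow> I1 = 0 \<or> (transmission - k1) * S = k1 * ratio_N * I1"
proof (cases "I1 = 0")
  case False
  with assms ratios_pos have N: "S + ratio_N * I1 > 0" by (simp add: add_nonneg_pos)
  have "transmission * I1 / (S + ratio_N * I1) * S = k1 * I1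
      \<longleftrightarrow> I1 * (transmission * S) = I1 * (k1 * (S + ratio_N * I1))"
    using N by (simp add: divide_eq_eq ac_simps)
  also have "\<dots> \<longleftrightarrow> transmission * S = k1 * (S + ratio_N * I1)"
    using False by simp
  also have "\<dots> \<longleftrightarrow> (transmission - k1) * S = k1 * ratio_N * I1"
    by (auto simp: algebra_simps)
  finally show ?thesis using False by simp
qed simp

lemma equilibrium_iff:
  assumes "0 \<le> S" "0 \<le> I1"
  shows "is_equilibrium Q0 b1 b2 b3 c1 c2 c3 th pp dl al mu u1 (S, I1, I2, A) \<longleftrightarrow>
      I2 = ratio_I2 * I1 \<and> A = ratio_A * I1 \<and> mu * S + k1 * I1 = Q0 \<and>
      (I1 = 0 \<or> (transmission - k1) * S = k1 * ratio_N * I1)"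
proof -
  have susceptible_balance: "Q0 - bm * S - mu * S = 0 \<and> bm * S - (th + mu + dl) * I1 = 0
      \<longleftrightarrow> mu * S + k1 * I1 = Q0 \<and> bm * S = k1 * I1" for bm
    by (auto simp: k1_def algebra_simps)
  show ?thesis
    unfolding is_equilibrium_def Let_def prod.case
    using I2_A_equations_iff[of I1 I2 A] I1_equation_iff[OF assms]
      susceptible_balance beta_m_on_ratios
    by metis
qed

lemma nonneg_equilibria:
  "{E. nonneg4 E \<and> is_equilibrium Q0 b1 b2 b3 c1 c2 c3 th pp dl al mu u1 E} =
     insert (Q0 / mu, 0, 0, 0)
       {(S, I1, ratio_I2 * I1, ratio_A * I1) | S I1. 0 \<le> S \<and> 0 < I1 \<and>
          mu * S + k1 * I1 = Q0 \<and> (transmission - k1) * S = k1 * ratio_N * I1}"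
  (is "?L = insert ?E0 ?R")
proof (intro equalityI subsetI)
  fix E assume "E \<in> ?L"
  then obtain S I1 I2 A where "E = (S, I1, I2, A)" and "0 \<le> S" "0 \<le> I1"
    and "is_equilibrium Q0 b1 b2 b3 c1 c2 c3 th pp dl al mu u1 (S, I1, I2, A)"
    by (cases E) (auto simp: nonneg4_def)
  then show "E \<in> insert ?E0 ?R"
    using mu_pos by (auto simp: equilibrium_iff eq_divide_eq)
next
  have "?E0 \<in> ?L"
    using Q0_pos mu_pos by (simp add: equilibrium_iff nonneg4_def)
  moreover have "(S, I1, ratio_I2 * I1, ratio_A * I1) \<in> ?L"
    if "0 \<le> S" "0 < I1" "mu * S + k1 * I1 = Q0"
      "(transmission - k1) * S = k1 * ratio_N * I1" for S I1
    using that ratios_pos equilibrium_iff[of S I1 "ratio_I2 * I1" "ratio_A * I1"]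
    by (simp add: nonneg4_def)
  ultimately show "E \<in> ?L" if "E \<in> insert ?E0 ?R" for E
    using that by auto
qed

lemma no_endemic_branch:
  assumes "transmission \<le> k1" "0 \<le> S" "0 < I1"
  shows "(transmission - k1) * S \<noteq> k1 * ratio_N * I1"
proof -
  have "(transmission - k1) * S \<le> 0"
    using assms by (simp add: mult_nonpos_nonneg)
  moreover have "k1 * ratio_N * I1 > 0"
    using assms k_pos ratios_pos by simp
  ultimately show ?thesis by linarith
qed

definition S_star :: real where
  "S_star = ratio_N * Q0 / (transmission - k1 + mu * ratio_N)"

definition I1_star :: real where
  "I1_star = (transmission - k1) * Q0 / (k1 * (transmission - k1 + mu * ratio_N))"

definition endemic_equilibrium :: "real \<times> real \<times> real \<times> real" where
  "endemic_equilibrium = (S_star, I1_star, ratio_I2 * I1_star, ratio_A * I1_star)"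

lemma endemic_denominator_pos: "k1 < transmission \<Longrightarrow> transmission - k1 + mu * ratio_N > 0"
  using mu_pos ratios_pos by (simp add: add_pos_pos)

lemma endemic_star_pos:
  assumes "k1 < transmission"
  shows "S_star > 0" "I1_star > 0"
  using assms endemic_denominator_pos[OF assms] Q0_pos k_pos ratios_pos
  by (simp_all add: S_star_def I1_star_def)

lemma endemic_star_solves:
  assumes "k1 < transmission"
  shows "mu * S_star + k1 * I1_star = Q0"
    and "(transmission - k1) * S_star = k1 * ratio_N * I1_star"
proof -
  define M where "M = transmission - k1 + mu * ratio_N"
  have nonzero: "M \<noteq> 0" "k1 \<noteq> 0"
    using endemic_denominator_pos[OF assms] k_pos by (simp_all add: M_def)
  have S: "S_star = ratio_N * Q0 / M" and I1: "I1_star = (transmission - k1) * Q0 / (k1 * M)"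
    by (simp_all add: S_star_def I1_star_def M_def)
  show "mu * S_star + k1 * I1_star = Q0"
    unfolding S I1 using nonzero by (simp add: field_simps) (simp add: M_def algebra_simps)
  show "(transmission - k1) * S_star = k1 * ratio_N * I1_star"
    unfolding S I1 using nonzero by (simp add: field_simps)
qed

lemma endemic_branch_iff:
  assumes K: "k1 < transmission"
  shows "mu * S + k1 * I1 = Q0 \<and> (transmission - k1) * S = k1 * ratio_N * I1
           \<longleftrightarrow> S = S_star \<and> I1 = I1_star"
proof
  assume "mu * S + k1 * I1 = Q0 \<and> (transmission - k1) * S = k1 * ratio_N * I1"
  then have "mu * (S - S_star) + k1 * (I1 - I1_star) = 0"
    and "(transmission - k1) * (S - S_star) = k1 * ratio_N * (I1 - I1_star)"
    using endemic_star_solves[OF K] by (simp_all add: algebra_simps)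
  then have "(transmission - k1 + mu * ratio_N) * (S - S_star) = 0"
    by algebra
  then have "S = S_star"
    using endemic_denominator_pos[OF K] by simp
  with \<open>mu * (S - S_star) + k1 * (I1 - I1_star) = 0\<close> show "S = S_star \<and> I1 = I1_star"
    using k_pos by simp
qed (use endemic_star_solves[OF K] in simp)

end

theorem theorem3:
  fixes Q0 b1 b2 b3 c1 c2 c3 th pp dl al mu u1 :: real
  assumes "Q0 > 0" "b1 > 0" "b2 > 0" "b3 > 0" "c1 > 0" "c2 > 0" "c3 > 0"
    and "th > 0" "pp > 0" "dl > 0" "al > 0" "mu > 0"
    and "0 \<le> u1" "u1 \<le> 1"
  shows "(R0 b1 b2 b3 c1 c2 c3 th pp dl al mu u1 \<le> 1 \<longrightarrow>
            {E. nonneg4 E \<and> is_equilibrium Q0 b1 b2 b3 c1 c2 c3 th pp dl al mu u1 E}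
              = {(Q0 / mu, 0, 0, 0)})
       \<and> (R0 b1 b2 b3 c1 c2 c3 th pp dl al mu u1 > 1 \<longrightarrow>
            (\<exists>E1. pos4 E1 \<and> E1 \<noteq> (Q0 / mu, 0, 0, 0) \<and>
               {E. nonneg4 E \<and> is_equilibrium Q0 b1 b2 b3 c1 c2 c3 th pp dl al mu u1 E}
                 = {(Q0 / mu, 0, 0, 0), E1}))"
proof -
  interpret hiv_model Q0 b1 b2 b3 c1 c2 c3 th pp dl al mu u1
    using assms by unfold_locales
  have R0_gt_iff: "R0 b1 b2 b3 c1 c2 c3 th pp dl al mu u1 > 1 \<longleftrightarrow> k1 < transmission"
    using k_pos by (simp add: R0_eq less_divide_eq)
  show ?thesis
  proof (intro conjI impI)
    assume "R0 b1 b2 b3 c1 c2 c3 th pp dl al mu u1 \<le> 1"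
    then have "transmission \<le> k1" using R0_gt_iff by linarith
    then show "{E. nonneg4 E \<and> is_equilibrium Q0 b1 b2 b3 c1 c2 c3 th pp dl al mu u1 E}
        = {(Q0 / mu, 0, 0, 0)}"
      by (auto simp: nonneg_equilibria dest: no_endemic_branch)
  next
    assume "R0 b1 b2 b3 c1 c2 c3 th pp dl al mu u1 > 1"
    then have K: "k1 < transmission" using R0_gt_iff by blast
    show "\<exists>E1. pos4 E1 \<and> E1 \<noteq> (Q0 / mu, 0, 0, 0) \<and>
        {E. nonneg4 E \<and> is_equilibrium Q0 b1 b2 b3 c1 c2 c3 th pp dl al mu u1 E}
          = {(Q0 / mu, 0, 0, 0), E1}"
    proof (intro exI conjI)
      show "pos4 endemic_equilibrium" "endemic_equilibrium \<noteq> (Q0 / mu, 0, 0, 0)"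
        using endemic_star_pos[OF K] ratios_pos
        by (simp_all add: pos4_def endemic_equilibrium_def)
      show "{E. nonneg4 E \<and> is_equilibrium Q0 b1 b2 b3 c1 c2 c3 th pp dl al mu u1 E}
          = {(Q0 / mu, 0, 0, 0), endemic_equilibrium}"
        using endemic_star_pos[OF K]
        by (auto simp: nonneg_equilibria endemic_branch_iff[OF K] endemic_equilibrium_def)
    qed
  qed
qed

end
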